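(* Let $A,M\in\mathbb{C}^{n\times n}$ be Hermitian with $M$ positive definite, and let the eigenvalues of the pair $(A,M)$ be $\lambda_1<\lambda_2\le\cdots\le\lambda_n$. Put $A_{\lambda_1}=A-\lambda_1 M$. Let $T\in\mathbb{C}^{n\times n}$ be Hermitian positive definite. Let $x^{(0)}\in\mathbb{C}^n$ be neither an eigenvector of $(A,M)$ associated with $\lambda_1$ nor $M$-orthogonal to the eigenspace associated with $\lambda_1$, and let $x^{(0)},x^{(1)},\ldots$ be the iterates of the following heuristic preconditioned CG iteration (for as long as it is defined): set $r^{(0)}=-A_{\lambda_1}x^{(0)}$, $\gamma^{(0)}=(Tr^{(0)})^*r^{(0)}$, $p^{(0)}=Tr^{(0)}$, and for $i=0,1,\ldots$: $w=A_{\lambda_1}p^{(i)}$, $\delta=\gamma^{(i)}/(w^*p^{(i)})$, $x^{(i+1)}=x^{(i)}+\delta p^{(i)}$, $r^{(i+1)}=r^{(i)}-\delta w$, $\gamma^{(i+1)}=(Tr^{(i+1)})^*r^{(i+1)}$, $p^{(i+1)}=Tr^{(i+1)}+(\gamma^{(i+1)}/\gamma^{(i)})p^{(i)}$. Define $B=T^{1/2}A_{\lambda_1}T^{1/2}$ and let $V$ be an arbitrary matrix whose columns form an orthonormal basis of the image $\operatorname{im}(B)$. Then the vectors $\tilde{x}^{(i)}=V^*T^{-1/2}x^{(i)}$, $i=0,1,\ldots$, are the iterates of the standard (non-preconditioned) conjugate gradient method applied to the linear system $\tilde{B}\tilde{x}=0$ with $\tilde{B}=V^*BV$ and initial guess 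$\tilde{x}^{(0)}$.
   Context: $T^{1/2}$ denotes the Hermitian positive definite square root of $T$. The asterisk denotes the conjugate transpose. *)

theory Defs
  imports "Jordan_Normal_Form.Schur_Decomposition" "Jordan_Normal_Form.Char_Poly"
begin

text \<open>u^* v (conjugate transpose of u times v)\<close>
definition hinner :: "complex vec \<Rightarrow> complex vec \<Rightarrow> complex" where
  "hinner u v = v \<bullet>c u"

definition hermitian :: "complex mat \<Rightarrow> bool" where
  "hermitian A \<longleftrightarrow> square_mat A \<and> mat_adjoint A = A"

definition pos_def :: "complex mat \<Rightarrow> bool" where
  "pos_def A \<longleftrightarrow> hermitian A \<and>
     (\<forall>x \<in> carrier_vec (dim_row A). x \<noteq> 0\<^sub>v (dim_row A) \<longrightarrow> Re (hinner x (A *\<^sub>v x)) > 0)"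

definition psqrt :: "complex mat \<Rightarrow> complex mat" where
  "psqrt T = (THE S. S \<in> carrier_mat (dim_row T) (dim_row T) \<and> pos_def S \<and> S * S = T)"

definition psqrt_inv :: "complex mat \<Rightarrow> complex mat" where
  "psqrt_inv T = (THE S. S \<in> carrier_mat (dim_row T) (dim_row T) \<and>
      S * psqrt T = 1\<^sub>m (dim_row T) \<and> psqrt T * S = 1\<^sub>m (dim_row T))"

text \<open>Characteristic polynomial det(lambda M - A) of the pencil (A,M); its roots, counted
  with multiplicity (order), are the eigenvalues of the pair (A,M).\<close>
definition pencil_char_poly :: "complex mat \<Rightarrow> complex mat \<Rightarrow> complex poly" where
  "pencil_char_poly A M = det (mat (dim_row A) (dim_col A) (\<lambda>(i,j). [: - A $$ (i,j), M $$ (i,j) :]))"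

text \<open>Heuristic preconditioned CG with matrix Al = A - lambda_1 M and preconditioner T.
  State: (x, r, gamma, p).\<close>
fun pcg :: "complex mat \<Rightarrow> complex mat \<Rightarrow> complex vec \<Rightarrow> nat \<Rightarrow>
    complex vec \<times> complex vec \<times> complex \<times> complex vec" where
  "pcg Al T x0 0 =
     (let r = - (Al *\<^sub>v x0) in (x0, r, hinner (T *\<^sub>v r) r, T *\<^sub>v r))"
| "pcg Al T x0 (Suc i) =
     (let (x, r, g, p) = pcg Al T x0 i;
          w = Al *\<^sub>v p;
          \<delta> = g / hinner w p;
          x' = x + \<delta> \<cdot>\<^sub>v p;
          r' = r - \<delta> \<cdot>\<^sub>v w;
          g' = hinner (T *\<^sub>v r') r';
          p' = T *\<^sub>v r' + (g' / g) \<cdot>\<^sub>v p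
      in (x', r', g', p'))"

definition pcg_x :: "complex mat \<Rightarrow> complex mat \<Rightarrow> complex vec \<Rightarrow> nat \<Rightarrow> complex vec" where
  "pcg_x Al T x0 i = fst (pcg Al T x0 i)"

text \<open>The first N iterates x^(0..N) are defined: all divisions used are by nonzero numbers.\<close>
definition pcg_defined :: "complex mat \<Rightarrow> complex mat \<Rightarrow> complex vec \<Rightarrow> nat \<Rightarrow> bool" where
  "pcg_defined Al T x0 N \<longleftrightarrow>
     (\<forall>j < N. case pcg Al T x0 j of (x, r, g, p) \<Rightarrow> hinner (Al *\<^sub>v p) p \<noteq> 0) \<and>
     (\<forall>j. Suc j < N \<longrightarrow> (case pcg Al T x0 j of (x, r, g, p) \<Rightarrow> g \<noteq> 0))"

fun cg :: "complex mat \<Rightarrow> complex vec \<Rightarrow> nat \<Rightarrow> complex vec \<times> complex vec \<times> complex vec" where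
  "cg B y0 0 = (let r = - (B *\<^sub>v y0) in (y0, r, r))"
| "cg B y0 (Suc i) =
     (let (y, r, p) = cg B y0 i;
          \<alpha> = hinner r r / hinner p (B *\<^sub>v p);
          y' = y + \<alpha> \<cdot>\<^sub>v p;
          r' = r - \<alpha> \<cdot>\<^sub>v (B *\<^sub>v p);
          \<beta> = hinner r' r' / hinner r r;
          p' = r' + \<beta> \<cdot>\<^sub>v p
      in (y', r', p'))"

definition cg_x :: "complex mat \<Rightarrow> complex vec \<Rightarrow> nat \<Rightarrow> complex vec" where
  "cg_x B y0 i = fst (cg B y0 i)"

definition cg_defined :: "complex mat \<Rightarrow> complex vec \<Rightarrow> nat \<Rightarrow> bool" where
  "cg_defined B y0 N \<longleftrightarrow>
     (\<forall>j < N. case cg B y0 j of (y, r, p) \<Rightarrow> hinner p (B *\<^sub>v p) \<noteq> 0) \<and>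
     (\<forall>j. Suc j < N \<longrightarrow> (case cg B y0 j of (y, r, p) \<Rightarrow> hinner r r \<noteq> 0))"

end

(* Write S = T^(1/2) and B = S A_l1 S. If im B is contained in im V, then V V^* B = B and, taking
   adjoints, B V V^* = B. Under the change of variables y = V^* S^(-1) x, one step of the
   preconditioned iteration is one step of CG for V^* B V: the invariants S r = V rho, S^(-1) p = V q and
   gamma = rho^* rho are preserved, since p^* A_l1 p = q^* (V^* B V) q makes the step lengths agree
   and S A_l1 p = V (V^* B V) q makes the residual updates agree.
   Existence and uniqueness of T^(1/2) come from the unitary diagonalization of Hermitian matrices,
   obtained from a unitary Schur triangularization. *)

theory Submission
  imports Defs "Jordan_Normal_Form.Spectral_Radius"
begin

section \<open>Hermitian inner product and adjoints\<close>

lemma hinner_sum: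
  assumes "u \<in> carrier_vec n" "v \<in> carrier_vec n"
  shows "hinner u v = (\<Sum>i<n. cnj (u $ i) * v $ i)"
  using assms unfolding hinner_def scalar_prod_def
  by (auto simp: lessThan_atLeast0 intro!: sum.cong)

lemma hinner_smult_left:
  "u \<in> carrier_vec n \<Longrightarrow> v \<in> carrier_vec n \<Longrightarrow> hinner (c \<cdot>\<^sub>v u) v = cnj c * hinner u v"
  by (simp add: hinner_sum sum_distrib_left mult.assoc)

lemma hinner_smult_right:
  "u \<in> carrier_vec n \<Longrightarrow> v \<in> carrier_vec n \<Longrightarrow> hinner u (c \<cdot>\<^sub>v v) = c * hinner u v"
  by (simp add: hinner_sum sum_distrib_left mult.left_commute)

lemma hinner_self_eq_0_iff: "u \<in> carrier_vec n \<Longrightarrow> hinner u u = 0 \<longleftrightarrow> u = 0\<^sub>v n"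
  unfolding hinner_def by (rule conjugate_square_eq_0_vec)

lemma hinner_self_pos:
  assumes "u \<in> carrier_vec n" "u \<noteq> 0\<^sub>v n"
  shows "Re (hinner u u) > 0" "hinner u u = complex_of_real (Re (hinner u u))"
proof -
  have "0 < hinner u u"
    unfolding hinner_def using conjugate_square_greater_0_vec[OF assms(1)] assms(2) by simp
  then show "Re (hinner u u) > 0" "hinner u u = complex_of_real (Re (hinner u u))"
    by (auto simp: less_complex_def complex_eq_iff)
qed

lemma carrier_mat_adjoint [simp]: "A \<in> carrier_mat m n \<Longrightarrow> mat_adjoint A \<in> carrier_mat n m"
  unfolding mat_adjoint_def by auto

lemma dim_mat_adjoint [simp]:
  "dim_row (mat_adjoint A) = dim_col A" "dim_col (mat_adjoint A) = dim_row A"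
  unfolding mat_adjoint_def by auto

lemma mult_mat_adjoint_vec_carrier [simp]:
  "A \<in> carrier_mat m n \<Longrightarrow> u \<in> carrier_vec m \<Longrightarrow> mat_adjoint A *\<^sub>v u \<in> carrier_vec n"
  by (rule carrier_vecI) simp

lemma index_mat_adjoint [simp]:
  "i < dim_col A \<Longrightarrow> j < dim_row A \<Longrightarrow> mat_adjoint A $$ (i, j) = cnj (A $$ (j, i))"
  unfolding mat_adjoint_def by (auto simp: mat_of_rows_def)

lemma mat_adjoint_adjoint [simp]: "mat_adjoint (mat_adjoint A) = (A :: complex mat)"
  by (rule eq_matI) auto

lemma mat_adjoint_one [simp]: "mat_adjoint (1\<^sub>m n) = (1\<^sub>m n :: complex mat)"
  by (rule eq_matI) auto

lemma mat_adjoint_zero [simp]: "mat_adjoint (0\<^sub>m m n) = (0\<^sub>m n m :: complex mat)"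
  by (rule eq_matI) auto

lemma mat_adjoint_mat_diag: "mat_adjoint (mat_diag n f) = mat_diag n (\<lambda>i. cnj (f i))"
  by (rule eq_matI) (auto simp: mat_diag_def)

lemma mat_adjoint_mult:
  fixes A B :: "complex mat"
  assumes "A \<in> carrier_mat m n" "B \<in> carrier_mat n l"
  shows "mat_adjoint (A * B) = mat_adjoint B * mat_adjoint A"
  by (rule eq_matI) (use assms in \<open>auto simp: scalar_prod_def mult.commute\<close>)

lemma mat_adjoint_four_block:
  fixes A B C D :: "complex mat"
  assumes "A \<in> carrier_mat m1 n1" "B \<in> carrier_mat m1 n2" "C \<in> carrier_mat m2 n1" "D \<in> carrier_mat m2 n2"
  shows "mat_adjoint (four_block_mat A B C D) =
    four_block_mat (mat_adjoint A) (mat_adjoint C) (mat_adjoint B) (mat_adjoint D)"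
  by (rule eq_matI) (use assms in auto)

lemma self_adjoint_congruence:
  fixes A U :: "complex mat"
  assumes A: "A \<in> carrier_mat n n" "mat_adjoint A = A" and U: "U \<in> carrier_mat n m"
  shows "mat_adjoint (mat_adjoint U * A * U) = mat_adjoint U * A * U"
proof -
  have "mat_adjoint U * A * U = mat_adjoint U * (A * U)"
    using A U by (intro assoc_mult_mat[of _ m n _ n _ m]) auto
  then have "mat_adjoint (mat_adjoint U * A * U) = mat_adjoint (A * U) * U"
    using mat_adjoint_mult[of "mat_adjoint U" m n "A * U" m] A U by simp
  also have "mat_adjoint (A * U) = mat_adjoint U * A"
    using mat_adjoint_mult[OF A(1) U] A(2) by simp
  finally show ?thesis .
qed

lemma self_adjoint_index:
  assumes "mat_adjoint A = (A :: complex mat)" "A \<in> carrier_mat n n" "i < n" "j < n"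
  shows "A $$ (i, j) = cnj (A $$ (j, i))"
proof -
  have "mat_adjoint A $$ (i, j) = A $$ (i, j)" by (simp only: assms(1))
  then show ?thesis using assms(2-4) by simp
qed

lemma mat_adjoint_minus_real_smult:
  fixes A M :: "complex mat"
  assumes "A \<in> carrier_mat n n" "M \<in> carrier_mat n n" "mat_adjoint A = A" "mat_adjoint M = M"
  shows "mat_adjoint (A - complex_of_real c \<cdot>\<^sub>m M) = A - complex_of_real c \<cdot>\<^sub>m M"
proof (rule eq_matI)
  fix i j assume "i < dim_row (A - complex_of_real c \<cdot>\<^sub>m M)" "j < dim_col (A - complex_of_real c \<cdot>\<^sub>m M)"
  then have ij: "i < n" "j < n" using assms by auto
  then show "mat_adjoint (A - complex_of_real c \<cdot>\<^sub>m M) $$ (i, j) = (A - complex_of_real c \<cdot>\<^sub>m M) $$ (i, j)"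
    using assms ij self_adjoint_index[OF assms(3,1) ij] self_adjoint_index[OF assms(4,2) ij] by simp
qed (use assms in auto)

lemma hinner_adjoint:
  assumes A: "A \<in> carrier_mat m n" and u: "u \<in> carrier_vec m" and v: "v \<in> carrier_vec n"
  shows "hinner u (A *\<^sub>v v) = hinner (mat_adjoint A *\<^sub>v u) v"
proof -
  have "hinner u (A *\<^sub>v v) = (\<Sum>i<m. cnj (u $ i) * (\<Sum>j<n. A $$ (i,j) * v $ j))"
    using A u v by (subst hinner_sum[of _ m]) (auto simp: scalar_prod_def lessThan_atLeast0)
  also have "\<dots> = (\<Sum>j<n. (\<Sum>i<m. cnj (u $ i) * A $$ (i,j)) * v $ j)"
    by (simp add: sum_distrib_left sum_distrib_right mult.assoc sum.swap[of _ "{..<m}"])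
  also have "\<dots> = hinner (mat_adjoint A *\<^sub>v u) v"
    using A u v by (subst hinner_sum[of _ n])
      (auto simp: scalar_prod_def lessThan_atLeast0 mult.commute intro!: sum.cong)
  finally show ?thesis .
qed

lemma hinner_isometry:
  assumes "V \<in> carrier_mat n k" "mat_adjoint V * V = 1\<^sub>m k" "a \<in> carrier_vec k" "b \<in> carrier_vec k"
  shows "hinner (V *\<^sub>v a) (V *\<^sub>v b) = hinner a b"
  using hinner_adjoint[of V n k "V *\<^sub>v a" b] assoc_mult_mat_vec[of "mat_adjoint V" k n V k a] assms
  by simp

lemma mat_adjoint_mult_index:
  assumes "W \<in> carrier_mat n m" "B \<in> carrier_mat n l" "i < m" "j < l"
  shows "(mat_adjoint W * B) $$ (i, j) = hinner (col W i) (col B j)"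
  using assms by (auto simp: hinner_sum[of _ n] scalar_prod_def lessThan_atLeast0 intro!: sum.cong)

lemma dim_mat_diag [simp]: "dim_row (mat_diag n f) = n" "dim_col (mat_diag n f) = n"
  unfolding mat_diag_def by simp_all

lemma mat_diag_mult_vec:
  assumes "v \<in> carrier_vec n"
  shows "mat_diag n f *\<^sub>v v = vec n (\<lambda>i. f i * v $ i)"
proof (rule eq_vecI)
  fix i assume "i < dim_vec (vec n (\<lambda>i. f i * v $ i))"
  then have i: "i < n" by simp
  have "(if i = k then f k else 0) * v $ k = (if i = k then f i * v $ i else 0)" for k
    by simp
  then show "(mat_diag n f *\<^sub>v v) $ i = vec n (\<lambda>i. f i * v $ i) $ i"
    using i assms by (simp add: mat_diag_def scalar_prod_def)
qed (use assms in auto)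

lemma mult_mat_vec_uminus:
  "A \<in> carrier_mat m n \<Longrightarrow> v \<in> carrier_vec n \<Longrightarrow> A *\<^sub>v (- v) = - (A *\<^sub>v (v :: complex vec))"
  by (intro eq_vecI) (auto simp: scalar_prod_def sum_negf)

section \<open>Unitary triangularization and diagonalization\<close>

lemma unitary_cancel_left:
  fixes U X :: "complex mat"
  assumes "U \<in> carrier_mat n n" "mat_adjoint U * U = 1\<^sub>m n" "X \<in> carrier_mat n k"
  shows "mat_adjoint U * (U * X) = X"
  using assms assoc_mult_mat[of "mat_adjoint U" n n U n X k] by simp

lemma unitary_right_inverse:
  fixes U :: "complex mat"
  assumes "U \<in> carrier_mat n n" "mat_adjoint U * U = 1\<^sub>m n"
  shows "U * mat_adjoint U = 1\<^sub>m n"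
  using mat_mult_left_right_inverse[of "mat_adjoint U" n U] assms by simp

lemma unitary_mult:
  fixes U W :: "complex mat"
  assumes U: "U \<in> carrier_mat n n" "mat_adjoint U * U = 1\<^sub>m n"
    and W: "W \<in> carrier_mat n n" "mat_adjoint W * W = 1\<^sub>m n"
  shows "mat_adjoint (U * W) * (U * W) = 1\<^sub>m n"
proof -
  have "mat_adjoint (U * W) * (U * W) = mat_adjoint W * (mat_adjoint U * (U * W))"
    unfolding mat_adjoint_mult[OF U(1) W(1)] using U W by (intro assoc_mult_mat[of _ n n _ n _ n]) auto
  then show ?thesis using U W by (simp add: unitary_cancel_left[of _ n])
qed

lemma unitary_conj_mult:
  fixes U W A :: "complex mat"
  assumes U: "U \<in> carrier_mat n n" and W: "W \<in> carrier_mat n n" and A: "A \<in> carrier_mat n n"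
  shows "mat_adjoint (U * W) * A * (U * W) = mat_adjoint W * (mat_adjoint U * A * U) * W"
proof -
  have [simp]: "mat_adjoint U \<in> carrier_mat n n" "mat_adjoint W \<in> carrier_mat n n" using U W by auto
  show ?thesis
    unfolding mat_adjoint_mult[OF U W] using U W A
    by (simp add: assoc_mult_mat[of _ n n _ n _ n] mult_carrier_mat[of _ n n _ n])
qed

lemma unitary_one_four_block:
  fixes U :: "complex mat"
  assumes "U \<in> carrier_mat m m" "mat_adjoint U * U = 1\<^sub>m m"
  shows "mat_adjoint (four_block_mat (1\<^sub>m 1) (0\<^sub>m 1 m) (0\<^sub>m m 1) U) *
      four_block_mat (1\<^sub>m 1) (0\<^sub>m 1 m) (0\<^sub>m m 1) U = 1\<^sub>m (Suc m)"
  using assms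
  by (simp add: mat_adjoint_four_block[of _ 1 1 _ m _ m] mult_four_block_mat[of _ 1 1 _ m _ m _ _ 1 _ m])

definition vec_normalize :: "complex vec \<Rightarrow> complex vec" where
  "vec_normalize w = complex_of_real (1 / sqrt (Re (hinner w w))) \<cdot>\<^sub>v w"

lemma vec_normalize_carrier [simp]: "w \<in> carrier_vec n \<Longrightarrow> vec_normalize w \<in> carrier_vec n"
  unfolding vec_normalize_def by simp

lemma hinner_vec_normalize:
  assumes "a \<in> carrier_vec n" "b \<in> carrier_vec n"
  shows "hinner (vec_normalize a) (vec_normalize b) =
    complex_of_real (1 / sqrt (Re (hinner a a)) / sqrt (Re (hinner b b))) * hinner a b"
  using assms unfolding vec_normalize_def
  by (simp add: hinner_smult_left[of _ n] hinner_smult_right[of _ n])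

lemma hinner_vec_normalize_self:
  assumes "w \<in> carrier_vec n" "w \<noteq> 0\<^sub>v n"
  shows "hinner (vec_normalize w) (vec_normalize w) = 1"
proof -
  define h where "h = Re (hinner w w)"
  have "h > 0" and w: "hinner w w = complex_of_real h"
    using hinner_self_pos[OF assms] unfolding h_def by auto
  have "hinner (vec_normalize w) (vec_normalize w) = complex_of_real (1 / sqrt h / sqrt h * h)"
    unfolding hinner_vec_normalize[OF assms(1) assms(1)] h_def[symmetric] w by simp
  also have "1 / sqrt h / sqrt h * h = 1"
    using \<open>h > 0\<close> by (simp add: field_simps flip: power2_eq_square)
  finally show ?thesis by simp
qed

lemma unitary_completion:
  assumes v: "v \<in> carrier_vec n" and v0: "v \<noteq> 0\<^sub>v n"
  shows "\<exists>W \<in> carrier_mat n n. mat_adjoint W * W = 1\<^sub>m n \<and> col W 0 = vec_normalize v"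
proof -
  interpret cof_vec_space n "TYPE(complex)" .
  define b where "b = basis_completion v"
  from basis_completion[OF v v0, folded b_def]
  have b: "set b \<subseteq> carrier_vec n" "distinct b" "\<not> lin_dep (set b)" "length b = n" "hd b = v"
    by auto
  have "n \<noteq> 0" using v v0 by (auto intro: eq_vecI)
  then obtain vs where bv: "b = v # vs" using b(4,5) by (cases b) auto
  define ws where "ws = gram_schmidt n b"
  from gram_schmidt_result[OF b(1-3) ws_def]
  have ws: "set ws \<subseteq> carrier_vec n" "corthogonal ws" "length ws = n" using b(4) by auto
  have "hd ws = v" unfolding ws_def bv using v by simp
  then have ws0: "ws ! 0 = v" using ws(3) \<open>n \<noteq> 0\<close> by (cases ws) auto
  have wsi: "ws ! i \<in> carrier_vec n" if "i < n" for i using ws that by auto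
  have orth: "hinner (ws ! i) (ws ! j) = 0 \<longleftrightarrow> i \<noteq> j" if "i < n" "j < n" for i j
    using corthogonalD[OF ws(2), of j i] ws(3) that unfolding hinner_def by auto
  define W where "W = mat_of_cols n (map vec_normalize ws)"
  have W: "W \<in> carrier_mat n n" unfolding W_def using mat_of_cols_carrier(1)[of n "map vec_normalize ws"] ws by simp
  have colW: "col W i = vec_normalize (ws ! i)" if "i < n" for i
    unfolding W_def using col_mat_of_cols[of i "map vec_normalize ws" n] wsi[OF that] that ws(3) by simp
  have "mat_adjoint W * W = 1\<^sub>m n"
  proof (rule eq_matI)
    fix i j assume "i < dim_row (1\<^sub>m n)" "j < dim_col (1\<^sub>m n)"
    then have i: "i < n" and j: "j < n" by auto
    have "(mat_adjoint W * W) $$ (i, j) = hinner (vec_normalize (ws ! i)) (vec_normalize (ws ! j))"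
      using mat_adjoint_mult_index[OF W W i j] colW i j by simp
    also have "\<dots> = 1\<^sub>m n $$ (i, j)"
    proof (cases "i = j")
      case True
      have "ws ! i \<noteq> 0\<^sub>v n"
        using orth[OF i i] hinner_self_eq_0_iff[OF wsi[OF i]] by auto
      then show ?thesis using True i hinner_vec_normalize_self[OF wsi[OF i]] by simp
    next
      case False
      then show ?thesis using i j orth[OF i j] hinner_vec_normalize[OF wsi[OF i] wsi[OF j]] by simp
    qed
    finally show "(mat_adjoint W * W) $$ (i, j) = 1\<^sub>m n $$ (i, j)" .
  qed (use W in auto)
  then show ?thesis using W colW[of 0] ws0 \<open>n \<noteq> 0\<close> by auto
qed

lemma unitary_first_column_eigenvector:
  fixes W A :: "complex mat"
  assumes W: "W \<in> carrier_mat n n" "mat_adjoint W * W = 1\<^sub>m n" and A: "A \<in> carrier_mat n n"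
    and ev: "A *\<^sub>v col W 0 = e \<cdot>\<^sub>v col W 0" and n: "0 < n"
  shows "col (mat_adjoint W * A * W) 0 = e \<cdot>\<^sub>v unit_vec n 0"
proof -
  have "col (mat_adjoint W * A * W) 0 = mat_adjoint W *\<^sub>v (A *\<^sub>v col W 0)"
    using W A n by (simp add: col_mult2[of _ n n] mult_carrier_mat[of _ n n _ n] assoc_mult_mat_vec[of _ n n _ n])
  also have "\<dots> = e \<cdot>\<^sub>v col (mat_adjoint W * W) 0"
    unfolding ev using W(1) n by (simp add: mult_mat_vec[of _ n n] col_mult2[of _ n n])
  finally show ?thesis unfolding W(2) using n by simp
qed

theorem unitary_schur_decomposition:
  fixes A :: "complex mat"
  assumes "A \<in> carrier_mat n n"
  shows "\<exists>U \<in> carrier_mat n n. mat_adjoint U * U = 1\<^sub>m n \<and> upper_triangular (mat_adjoint U * A * U)"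
  using assms
proof (induction n arbitrary: A)
  case 0
  then show ?case by (intro bexI[of _ "1\<^sub>m 0"]) (auto simp: upper_triangular_def)
next
  case (Suc m)
  have A: "A \<in> carrier_mat (Suc m) (Suc m)" by fact
  obtain e where "eigenvalue A e"
    using spectrum_non_empty[OF A] unfolding spectrum_def by auto
  then obtain v where v: "v \<in> carrier_vec (Suc m)" "v \<noteq> 0\<^sub>v (Suc m)" and ev: "A *\<^sub>v v = e \<cdot>\<^sub>v v"
    using A unfolding eigenvalue_def eigenvector_def by auto
  obtain W where W: "W \<in> carrier_mat (Suc m) (Suc m)" "mat_adjoint W * W = 1\<^sub>m (Suc m)"
    and W0: "col W 0 = vec_normalize v"
    using unitary_completion[OF v] by auto
  have "A *\<^sub>v col W 0 = e \<cdot>\<^sub>v col W 0"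
    unfolding W0 vec_normalize_def using A v ev
    by (simp add: mult_mat_vec[of _ "Suc m" "Suc m"] smult_smult_assoc mult.commute)
  note col0 = unitary_first_column_eigenvector[OF W A this]
  define A' where "A' = mat_adjoint W * A * W"
  have A': "A' \<in> carrier_mat (1 + m) (1 + m)" unfolding A'_def using W A by auto
  obtain A1 A2 A0 A3 where sb: "split_block A' 1 1 = (A1, A2, A0, A3)"
    by (cases "split_block A' 1 1") auto
  have "dim_row A' = 1 + m" "dim_col A' = 1 + m" using A' by auto
  note blk = split_block[OF sb this]
  have A0: "A0 = 0\<^sub>m m 1"
  proof (rule eq_matI)
    fix i j assume ij: "i < dim_row (0\<^sub>m m 1)" "j < dim_col (0\<^sub>m m 1)"
    have "A0 $$ (i, j) = col A' 0 $ Suc i" using blk A' ij by simp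
    then show "A0 $$ (i, j) = 0\<^sub>m m 1 $$ (i, j)"
      using col0 ij unfolding A'_def by simp
  qed (use blk A' in auto)
  obtain U3 where U3: "U3 \<in> carrier_mat m m" "mat_adjoint U3 * U3 = 1\<^sub>m m"
    and ut3: "upper_triangular (mat_adjoint U3 * A3 * U3)"
    using Suc.IH[OF blk(4)] by auto
  define Ub where "Ub = four_block_mat (1\<^sub>m 1) (0\<^sub>m 1 m) (0\<^sub>m m 1) U3"
  have Ub: "Ub \<in> carrier_mat (Suc m) (Suc m)" "mat_adjoint Ub * Ub = 1\<^sub>m (Suc m)"
    unfolding Ub_def using U3 unitary_one_four_block[OF U3] by auto
  have "mat_adjoint (W * Ub) * A * (W * Ub) = mat_adjoint Ub * A' * Ub"
    unfolding A'_def using W(1) Ub(1) A by (rule unitary_conj_mult)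
  also have "\<dots> = four_block_mat A1 (A2 * U3) (0\<^sub>m m 1) (mat_adjoint U3 * A3 * U3)"
    unfolding Ub_def blk(5) A0 using U3 blk(1-4) A'
    by (simp add: mat_adjoint_four_block[of _ 1 1 _ m _ m] mult_four_block_mat[of _ 1 1 _ m _ m _ _ 1 _ m]
        mult_carrier_mat[of _ m m _ m])
  finally have "upper_triangular (mat_adjoint (W * Ub) * A * (W * Ub))"
    using upper_triangular_four_block[of A1 1 _ m] blk A' U3 ut3 by (auto simp: upper_triangular_def)
  moreover have "mat_adjoint (W * Ub) * (W * Ub) = 1\<^sub>m (Suc m)"
    using unitary_mult W Ub by blast
  ultimately show ?case using W Ub by (intro bexI[of _ "W * Ub"]) auto
qed

lemma unitary_diagonalization_eigenvectors:
  fixes A U :: "complex mat"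
  assumes A: "A \<in> carrier_mat n n" and U: "U \<in> carrier_mat n n" "mat_adjoint U * U = 1\<^sub>m n"
    and D: "mat_adjoint U * A * U = mat_diag n f" and i: "i < n"
  shows "A *\<^sub>v col U i = f i \<cdot>\<^sub>v col U i"
proof -
  have "A * U = U * (mat_adjoint U * (A * U))"
    using unitary_cancel_left[of "mat_adjoint U" n "A * U" n] unitary_right_inverse[OF U] A U by simp
  also have "mat_adjoint U * (A * U) = mat_diag n f"
    unfolding D[symmetric] using A U by (intro assoc_mult_mat[symmetric, of _ n n _ n _ n]) auto
  finally have AU: "A * U = U * mat_diag n f" .
  have "A *\<^sub>v col U i = col (A * U) i" by (rule col_mult2[OF A U(1) i, symmetric])
  also have "\<dots> = f i \<cdot>\<^sub>v col U i"
    unfolding AU mat_diag_mult_right[OF U(1)] using U(1) i by (auto intro!: eq_vecI)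
  finally show ?thesis .
qed

lemma unitary_diagonalization_decompose:
  fixes A U :: "complex mat"
  assumes A: "A \<in> carrier_mat n n" and U: "U \<in> carrier_mat n n" "mat_adjoint U * U = 1\<^sub>m n"
  shows "U * (mat_adjoint U * A * U) * mat_adjoint U = A"
proof -
  have UU: "U * mat_adjoint U = 1\<^sub>m n" by (rule unitary_right_inverse[OF U])
  have "U * (mat_adjoint U * A * U) * mat_adjoint U = (U * mat_adjoint U) * A * (U * mat_adjoint U)"
    using A U by (simp add: assoc_mult_mat[of _ n n _ n _ n] mult_carrier_mat[of _ n n _ n])
  then show ?thesis unfolding UU using A by simp
qed

theorem hermitian_unitary_diagonalization:
  fixes A :: "complex mat"
  assumes A: "A \<in> carrier_mat n n" "hermitian A"
  obtains U d where "U \<in> carrier_mat n n" "mat_adjoint U * U = 1\<^sub>m n"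
    "mat_adjoint U * A * U = mat_diag n (\<lambda>i. complex_of_real (d i))"
proof -
  obtain U where U: "U \<in> carrier_mat n n" "mat_adjoint U * U = 1\<^sub>m n"
    and ut: "upper_triangular (mat_adjoint U * A * U)"
    using unitary_schur_decomposition[OF A(1)] by auto
  define D where "D = mat_adjoint U * A * U"
  have D: "D \<in> carrier_mat n n" unfolding D_def using U A by auto
  have D_herm: "mat_adjoint D = D"
    unfolding D_def using self_adjoint_congruence[OF A(1) _ U(1)] A(2) unfolding hermitian_def by blast
  note D_sym = self_adjoint_index[OF D_herm D]
  have "D = mat_diag n (\<lambda>i. complex_of_real (Re (D $$ (i, i))))"
  proof (rule eq_matI)
    fix i j assume ij: "i < dim_row (mat_diag n (\<lambda>i. complex_of_real (Re (D $$ (i, i)))))"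
      "j < dim_col (mat_diag n (\<lambda>i. complex_of_real (Re (D $$ (i, i)))))"
    then have i: "i < n" and j: "j < n" by auto
    have "D $$ (i, j) = 0" if "i \<noteq> j"
    proof (cases "j < i")
      case True
      then show ?thesis using ut i j D unfolding D_def upper_triangular_def by auto
    next
      case False
      then have "D $$ (j, i) = 0" using ut i j D that unfolding D_def upper_triangular_def by auto
      with D_sym[OF i j] show ?thesis by simp
    qed
    moreover have "D $$ (i, i) = complex_of_real (Re (D $$ (i, i)))"
    proof -
      have "D $$ (i, i) \<in> \<real>"
        unfolding Reals_cnj_iff using D_sym[OF i i] by (rule sym)
      then show ?thesis by (simp add: complex_is_Real_iff complex_eq_iff)
    qed
    ultimately show "D $$ (i, j) = mat_diag n (\<lambda>i. complex_of_real (Re (D $$ (i, i)))) $$ (i, j)"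
      using i j by (auto simp: mat_diag_def)
  qed (use D in auto)
  then have "mat_adjoint U * A * U = mat_diag n (\<lambda>i. complex_of_real (Re (D $$ (i, i))))"
    by (simp add: D_def)
  with U show ?thesis by (rule that)
qed

section \<open>Positive definite square roots\<close>

lemma pos_def_diagonalization_pos:
  fixes A U :: "complex mat"
  assumes A: "A \<in> carrier_mat n n" "pos_def A" and U: "U \<in> carrier_mat n n" "mat_adjoint U * U = 1\<^sub>m n"
    and D: "mat_adjoint U * A * U = mat_diag n (\<lambda>i. complex_of_real (d i))" and i: "i < n"
  shows "d i > 0"
proof -
  have "col U i \<noteq> 0\<^sub>v n"
    using mat_adjoint_mult_index[OF U(1) U(1) i i] U(2) i hinner_self_eq_0_iff[of "col U i" n] U(1)
    by auto
  then have "Re (hinner (col U i) (A *\<^sub>v col U i)) > 0"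
    using A U i unfolding pos_def_def by auto
  also have "A *\<^sub>v col U i = complex_of_real (d i) \<cdot>\<^sub>v col U i"
    by (rule unitary_diagonalization_eigenvectors[OF A(1) U D i])
  also have "Re (hinner (col U i) (complex_of_real (d i) \<cdot>\<^sub>v col U i)) = d i"
    using mat_adjoint_mult_index[OF U(1) U(1) i i] U i by (simp add: hinner_smult_right[of _ n])
  finally show ?thesis .
qed

lemma pos_def_mat_diag:
  assumes d: "\<And>i. i < n \<Longrightarrow> d i > 0"
  shows "pos_def (mat_diag n (\<lambda>i. complex_of_real (d i)))"
  unfolding pos_def_def hermitian_def
proof (intro conjI ballI impI)
  show "square_mat (mat_diag n (\<lambda>i. complex_of_real (d i)))" by simp
  show "mat_adjoint (mat_diag n (\<lambda>i. complex_of_real (d i))) = mat_diag n (\<lambda>i. complex_of_real (d i))"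
    by (simp add: mat_adjoint_mat_diag)
  fix x :: "complex vec" assume "x \<in> carrier_vec (dim_row (mat_diag n (\<lambda>i. complex_of_real (d i))))"
    and "x \<noteq> 0\<^sub>v (dim_row (mat_diag n (\<lambda>i. complex_of_real (d i))))"
  then have x: "x \<in> carrier_vec n" and "x \<noteq> 0\<^sub>v n" by auto
  then obtain i where i: "i < n" and "x $ i \<noteq> 0"
    by (metis eq_vecI carrier_vecD index_zero_vec(1,2))
  have "Re (hinner x (mat_diag n (\<lambda>i. complex_of_real (d i)) *\<^sub>v x)) =
      (\<Sum>k<n. d k * ((Re (x $ k))\<^sup>2 + (Im (x $ k))\<^sup>2))"
    using x by (simp add: mat_diag_mult_vec hinner_sum[of _ n] Re_sum algebra_simps power2_eq_square)
  also have "\<dots> > 0"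
    using i d \<open>x $ i \<noteq> 0\<close>
    by (intro sum_pos2[of _ i]) (auto simp: complex_neq_0 less_imp_le)
  finally show "Re (hinner x (mat_diag n (\<lambda>i. complex_of_real (d i)) *\<^sub>v x)) > 0" .
qed

lemma pos_def_unitary_conj:
  fixes U D :: "complex mat"
  assumes U: "U \<in> carrier_mat n n" "mat_adjoint U * U = 1\<^sub>m n" and D: "D \<in> carrier_mat n n" "pos_def D"
  shows "pos_def (U * D * mat_adjoint U)"
  unfolding pos_def_def hermitian_def
proof (intro conjI ballI impI)
  show "square_mat (U * D * mat_adjoint U)" using U D by simp
  show "mat_adjoint (U * D * mat_adjoint U) = U * D * mat_adjoint U"
    using self_adjoint_congruence[of D n "mat_adjoint U" n] U D unfolding pos_def_def hermitian_def by simp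
  fix x :: "complex vec" assume "x \<in> carrier_vec (dim_row (U * D * mat_adjoint U))"
    and "x \<noteq> 0\<^sub>v (dim_row (U * D * mat_adjoint U))"
  then have x: "x \<in> carrier_vec n" and x0: "x \<noteq> 0\<^sub>v n" using U by auto
  define y where "y = mat_adjoint U *\<^sub>v x"
  have y: "y \<in> carrier_vec n" unfolding y_def using U x by simp
  have "U *\<^sub>v y = x"
    unfolding y_def using unitary_right_inverse[OF U] U x
    by (simp flip: assoc_mult_mat_vec[of U n n "mat_adjoint U" n x])
  then have "y \<noteq> 0\<^sub>v n" using x0 U by auto
  then have "Re (hinner y (D *\<^sub>v y)) > 0" using D y unfolding pos_def_def by auto
  also have "hinner y (D *\<^sub>v y) = hinner x (U *\<^sub>v (D *\<^sub>v y))"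
    unfolding y_def using hinner_adjoint[of U n n x "D *\<^sub>v (mat_adjoint U *\<^sub>v x)"] U D x by simp
  also have "U *\<^sub>v (D *\<^sub>v y) = U * D * mat_adjoint U *\<^sub>v x"
    unfolding y_def using U D x by (simp add: mult_carrier_mat[of _ n n _ n] assoc_mult_mat_vec[of _ n n _ n])
  finally show "Re (hinner x (U * D * mat_adjoint U *\<^sub>v x)) > 0" .
qed

theorem pos_def_sqrt_exists:
  fixes T :: "complex mat"
  assumes T: "T \<in> carrier_mat n n" "pos_def T"
  shows "\<exists>S \<in> carrier_mat n n. pos_def S \<and> S * S = T"
proof -
  obtain U d where U: "U \<in> carrier_mat n n" "mat_adjoint U * U = 1\<^sub>m n"
    and D: "mat_adjoint U * T * U = mat_diag n (\<lambda>i. complex_of_real (d i))"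
    using hermitian_unitary_diagonalization[OF T(1)] T(2) unfolding pos_def_def by blast
  have d: "d i > 0" if "i < n" for i by (rule pos_def_diagonalization_pos[OF T U D that])
  define R where "R = mat_diag n (\<lambda>i. complex_of_real (sqrt (d i)))"
  have R: "R \<in> carrier_mat n n" "pos_def R"
    unfolding R_def using d by (auto intro: pos_def_mat_diag)
  have RR: "R * R = mat_diag n (\<lambda>i. complex_of_real (d i))"
    unfolding R_def mat_diag_diag using d
    by (auto intro!: eq_matI simp: mat_diag_def abs_of_pos simp flip: of_real_mult)
  have "(U * R * mat_adjoint U) * (U * R * mat_adjoint U) = U * (R * (mat_adjoint U * U) * R) * mat_adjoint U"
    using U R by (simp add: assoc_mult_mat[of _ n n _ n _ n] mult_carrier_mat[of _ n n _ n]
        unitary_cancel_left[of U n _ n])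
  also have "\<dots> = U * (mat_adjoint U * T * U) * mat_adjoint U"
    unfolding U(2) D RR[symmetric] using R by simp
  also have "\<dots> = T"
    by (rule unitary_diagonalization_decompose[OF T(1) U])
  finally have "(U * R * mat_adjoint U) * (U * R * mat_adjoint U) = T" .
  moreover have "U * R * mat_adjoint U \<in> carrier_mat n n" using U(1) R(1) by auto
  moreover have "pos_def (U * R * mat_adjoint U)" by (rule pos_def_unitary_conj[OF U R])
  ultimately show ?thesis by (intro bexI[of _ "U * R * mat_adjoint U"] conjI)
qed

lemma pos_def_sqrt_eigenvector:
  fixes S :: "complex mat"
  assumes S: "S \<in> carrier_mat n n" "pos_def S" and u: "u \<in> carrier_vec n"
    and SSu: "S *\<^sub>v (S *\<^sub>v u) = complex_of_real (c * c) \<cdot>\<^sub>v u" and c: "c > 0"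
  shows "S *\<^sub>v u = complex_of_real c \<cdot>\<^sub>v u"
proof -
  define w where "w = S *\<^sub>v u - complex_of_real c \<cdot>\<^sub>v u"
  have w: "w \<in> carrier_vec n" unfolding w_def using S u by auto
  have Sw: "S *\<^sub>v w = (- complex_of_real c) \<cdot>\<^sub>v w"
    unfolding w_def using S u
    by (simp add: mult_minus_distrib_mat_vec[of _ n n] mult_mat_vec[of _ n n] SSu)
      (auto intro!: eq_vecI simp: algebra_simps)
  have "w = 0\<^sub>v n"
  proof (rule ccontr)
    assume w0: "w \<noteq> 0\<^sub>v n"
    have "Re (hinner w (S *\<^sub>v w)) > 0" using S w w0 unfolding pos_def_def by auto
    moreover have "Re (hinner w (S *\<^sub>v w)) = - c * Re (hinner w w)"
      unfolding Sw using w by (simp add: hinner_smult_right[of _ n])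
    ultimately show False using mult_pos_pos[OF c hinner_self_pos(1)[OF w w0]] by linarith
  qed
  show ?thesis
  proof (rule eq_vecI)
    fix i assume "i < dim_vec (complex_of_real c \<cdot>\<^sub>v u)"
    then show "(S *\<^sub>v u) $ i = (complex_of_real c \<cdot>\<^sub>v u) $ i"
      using arg_cong[OF \<open>w = 0\<^sub>v n\<close>, of "\<lambda>v. v $ i"] S u unfolding w_def by simp
  qed (use S u in simp)
qed

text \<open>\<open>S'\<close> acts like \<open>S\<close> on an orthonormal eigenbasis of \<open>S\<close>.\<close>

theorem pos_def_sqrt_unique:
  fixes S S' :: "complex mat"
  assumes S: "S \<in> carrier_mat n n" "pos_def S" and S': "S' \<in> carrier_mat n n" "pos_def S'"
    and eq: "S * S = S' * S'"
  shows "S = S'"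
proof -
  obtain U d where U: "U \<in> carrier_mat n n" "mat_adjoint U * U = 1\<^sub>m n"
    and D: "mat_adjoint U * S * U = mat_diag n (\<lambda>i. complex_of_real (d i))"
    using hermitian_unitary_diagonalization[OF S(1)] S(2) unfolding pos_def_def by blast
  have eigen: "S *\<^sub>v col U i = complex_of_real (d i) \<cdot>\<^sub>v col U i" if "i < n" for i
    using unitary_diagonalization_eigenvectors[OF S(1) U D that] .
  have "col (S' * U) i = col (S * U) i" if i: "i < n" for i
  proof -
    have u: "col U i \<in> carrier_vec n" using U i by simp
    have "S' *\<^sub>v (S' *\<^sub>v col U i) = (S' * S') *\<^sub>v col U i"
      using S' u by simp
    also have "\<dots> = S *\<^sub>v (S *\<^sub>v col U i)"
      using S u unfolding eq[symmetric] by simp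
    also have "\<dots> = complex_of_real (d i * d i) \<cdot>\<^sub>v col U i"
      using S u by (simp add: eigen[OF i] mult_mat_vec[of _ n n] smult_smult_assoc)
    finally have "S' *\<^sub>v col U i = complex_of_real (d i) \<cdot>\<^sub>v col U i"
      using pos_def_sqrt_eigenvector[OF S' u] pos_def_diagonalization_pos[OF S U D i] by blast
    then show ?thesis
      unfolding col_mult2[OF S'(1) U(1) i] col_mult2[OF S(1) U(1) i] using eigen[OF i] by simp
  qed
  then have "S' * U = S * U" using S S' U by (intro mat_col_eqI) auto
  then have "S' * (U * mat_adjoint U) = S * (U * mat_adjoint U)"
    using S S' U assoc_mult_mat[of S' n n U n "mat_adjoint U" n] assoc_mult_mat[of S n n U n "mat_adjoint U" n]
    by simp
  then show ?thesis using S S' unfolding unitary_right_inverse[OF U] by simp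
qed

lemma pos_def_invertible:
  fixes A :: "complex mat"
  assumes A: "A \<in> carrier_mat n n" "pos_def A"
  shows "\<exists>B \<in> carrier_mat n n. B * A = 1\<^sub>m n \<and> A * B = 1\<^sub>m n"
proof -
  have "det A \<noteq> 0"
  proof
    assume "det A = 0"
    then obtain v where v: "v \<in> carrier_vec n" "v \<noteq> 0\<^sub>v n" and Av: "A *\<^sub>v v = 0\<^sub>v n"
      using det_0_iff_vec_prod_zero[OF A(1)] by auto
    have "Re (hinner v (A *\<^sub>v v)) > 0" using A v unfolding pos_def_def by auto
    then show False unfolding Av using v by (simp add: hinner_sum[of _ n])
  qed
  from det_non_zero_imp_unit[OF A(1) this, of undefined]
  show ?thesis unfolding Units_def ring_mat_def by auto
qed

lemma psqrt:
  fixes T :: "complex mat"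
  assumes "T \<in> carrier_mat n n" "pos_def T"
  shows "psqrt T \<in> carrier_mat n n" "pos_def (psqrt T)" "psqrt T * psqrt T = T"
proof -
  have "\<exists>!S. S \<in> carrier_mat n n \<and> pos_def S \<and> S * S = T"
    using pos_def_sqrt_exists[OF assms] pos_def_sqrt_unique by blast
  from theI'[OF this] show "psqrt T \<in> carrier_mat n n" "pos_def (psqrt T)" "psqrt T * psqrt T = T"
    unfolding psqrt_def using assms(1) by auto
qed

lemma psqrt_inv:
  fixes T :: "complex mat"
  assumes "T \<in> carrier_mat n n" "pos_def T"
  shows "psqrt_inv T \<in> carrier_mat n n" "psqrt_inv T * psqrt T = 1\<^sub>m n" "psqrt T * psqrt_inv T = 1\<^sub>m n"
proof -
  note S = psqrt[OF assms]
  have inverse_unique: "B = B'" if "B \<in> carrier_mat n n" "B * psqrt T = 1\<^sub>m n"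
    and "B' \<in> carrier_mat n n" "psqrt T * B' = 1\<^sub>m n" for B B'
    using that S(1) assoc_mult_mat[of B n n "psqrt T" n B' n] by simp
  have "\<exists>!B. B \<in> carrier_mat n n \<and> B * psqrt T = 1\<^sub>m n \<and> psqrt T * B = 1\<^sub>m n"
    using pos_def_invertible[OF S(1,2)] inverse_unique by blast
  from theI'[OF this]
  show "psqrt_inv T \<in> carrier_mat n n" "psqrt_inv T * psqrt T = 1\<^sub>m n" "psqrt T * psqrt_inv T = 1\<^sub>m n"
    unfolding psqrt_inv_def using assms(1) by auto
qed

section \<open>Preconditioned CG as CG on the transformed system\<close>

lemma isometry_range_projection:
  fixes V B :: "complex mat"
  assumes V: "V \<in> carrier_mat n k" "mat_adjoint V * V = 1\<^sub>m k" and B: "B \<in> carrier_mat n m"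
    and range: "{B *\<^sub>v z | z. z \<in> carrier_vec m} \<subseteq> {V *\<^sub>v y | y. y \<in> carrier_vec k}"
  shows "V * mat_adjoint V * B = B"
proof (rule mat_col_eqI)
  fix j assume "j < dim_col B"
  then have j: "j < m" using B by simp
  have "col B j = B *\<^sub>v unit_vec m j"
    using B j by (intro eq_vecI) auto
  moreover have "B *\<^sub>v unit_vec m j \<in> {V *\<^sub>v y | y. y \<in> carrier_vec k}"
    using range unit_vec_carrier[of m j] by blast
  ultimately obtain y where y: "y \<in> carrier_vec k" and By: "col B j = V *\<^sub>v y"
    by auto
  have "col (V * mat_adjoint V * B) j = V *\<^sub>v (mat_adjoint V *\<^sub>v (V *\<^sub>v y))"
    using V B j By y by (simp add: col_mult2[of _ n n] assoc_mult_mat_vec[of V n k "mat_adjoint V" n])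
  also have "\<dots> = V *\<^sub>v y"
    using V y assoc_mult_mat_vec[of "mat_adjoint V" k n V k y] by simp
  finally show "col (V * mat_adjoint V * B) j = col B j" using By by simp
qed (use V B in auto)

text \<open>Here \<open>Al\<close> stands for \<open>A - \<lambda>\<^sub>1 M\<close>, \<open>S\<close> and \<open>Si\<close> for \<open>T^(1/2)\<close> and \<open>T^(-1/2)\<close>;
  \<open>range_proj\<close> expresses \<open>im (S Al S) \<subseteq> im V\<close>.\<close>

locale pcg_cg_transform =
  fixes Al S Si T V :: "complex mat" and n k :: nat
  assumes Al: "Al \<in> carrier_mat n n" "mat_adjoint Al = Al"
    and S: "S \<in> carrier_mat n n" "mat_adjoint S = S" "S * S = T"
    and Si: "Si \<in> carrier_mat n n" "Si * S = 1\<^sub>m n" "S * Si = 1\<^sub>m n"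
    and V: "V \<in> carrier_mat n k" "mat_adjoint V * V = 1\<^sub>m k"
    and range_proj: "V * mat_adjoint V * (S * Al * S) = S * Al * S"
begin

definition Bt :: "complex mat" where
  "Bt = mat_adjoint V * (S * Al * S) * V"

lemma Bt_carrier: "Bt \<in> carrier_mat k k"
  unfolding Bt_def using S Al V by auto

lemma carrier_mult_vec [simp]:
  "z \<in> carrier_vec n \<Longrightarrow> Al *\<^sub>v z \<in> carrier_vec n"
  "z \<in> carrier_vec n \<Longrightarrow> S *\<^sub>v z \<in> carrier_vec n"
  "z \<in> carrier_vec n \<Longrightarrow> Si *\<^sub>v z \<in> carrier_vec n"
  "z \<in> carrier_vec n \<Longrightarrow> T *\<^sub>v z \<in> carrier_vec n"
  "z \<in> carrier_vec n \<Longrightarrow> mat_adjoint V *\<^sub>v z \<in> carrier_vec k"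
  "y \<in> carrier_vec k \<Longrightarrow> V *\<^sub>v y \<in> carrier_vec n"
  "y \<in> carrier_vec k \<Longrightarrow> Bt *\<^sub>v y \<in> carrier_vec k"
  using Al S Si V Bt_carrier by auto

lemma S_Si_vec: "z \<in> carrier_vec n \<Longrightarrow> S *\<^sub>v (Si *\<^sub>v z) = z"
  using S Si assoc_mult_mat_vec[of S n n Si n z] by simp

lemma Si_S_vec: "z \<in> carrier_vec n \<Longrightarrow> Si *\<^sub>v (S *\<^sub>v z) = z"
  using S Si assoc_mult_mat_vec[of Si n n S n z] by simp

lemma V_isometry_vec: "y \<in> carrier_vec k \<Longrightarrow> mat_adjoint V *\<^sub>v (V *\<^sub>v y) = y"
  using V assoc_mult_mat_vec[of "mat_adjoint V" k n V k y] by simp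

lemma B_mult_vec: "z \<in> carrier_vec n \<Longrightarrow> (S * Al * S) *\<^sub>v z = S *\<^sub>v (Al *\<^sub>v (S *\<^sub>v z))"
  using S Al by (simp add: assoc_mult_mat_vec[of _ n n _ n] mult_carrier_mat[of _ n n _ n])

lemma range_proj_right: "S * Al * S * (V * mat_adjoint V) = S * Al * S"
proof -
  have B: "S * Al * S \<in> carrier_mat n n" using S Al by auto
  have "mat_adjoint (S * Al * S) = S * Al * S"
    using self_adjoint_congruence[OF Al(1) Al(2) S(1)] S(2) by simp
  moreover have "mat_adjoint (V * mat_adjoint V) = V * mat_adjoint V"
    using mat_adjoint_mult[of V n k "mat_adjoint V" n] V by simp
  ultimately have "mat_adjoint (V * mat_adjoint V * (S * Al * S)) = S * Al * S * (V * mat_adjoint V)"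
    using mat_adjoint_mult[OF _ B, of "V * mat_adjoint V" n] V by simp
  then show ?thesis
    unfolding range_proj using self_adjoint_congruence[OF Al(1) Al(2) S(1)] S(2) by simp
qed

lemma Bt_mult_vec:
  assumes y: "y \<in> carrier_vec k"
  shows "Bt *\<^sub>v y = mat_adjoint V *\<^sub>v (S *\<^sub>v (Al *\<^sub>v (S *\<^sub>v (V *\<^sub>v y))))"
proof -
  have B: "S * Al * S \<in> carrier_mat n n" using S Al by auto
  have "Bt *\<^sub>v y = (mat_adjoint V * (S * Al * S)) *\<^sub>v (V *\<^sub>v y)"
    unfolding Bt_def using mult_carrier_mat[OF carrier_mat_adjoint[OF V(1)] B] V y
    by (intro assoc_mult_mat_vec[of _ k n _ k]) auto
  also have "\<dots> = mat_adjoint V *\<^sub>v ((S * Al * S) *\<^sub>v (V *\<^sub>v y))"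
    using B V y by (intro assoc_mult_mat_vec[of _ k n _ n]) auto
  finally show ?thesis using V y by (simp add: B_mult_vec)
qed

lemma V_Bt_mult_vec:
  "y \<in> carrier_vec k \<Longrightarrow> V *\<^sub>v (Bt *\<^sub>v y) = S *\<^sub>v (Al *\<^sub>v (S *\<^sub>v (V *\<^sub>v y)))"
  using arg_cong[OF range_proj, of "\<lambda>X. X *\<^sub>v (V *\<^sub>v y)"] S Al V
  by (simp add: Bt_mult_vec B_mult_vec assoc_mult_mat_vec[of _ n k _ n] assoc_mult_mat_vec[of _ n n _ n]
      mult_carrier_mat[of _ n n _ n])

lemma B_proj_vec:
  "z \<in> carrier_vec n \<Longrightarrow> S *\<^sub>v (Al *\<^sub>v (S *\<^sub>v (V *\<^sub>v (mat_adjoint V *\<^sub>v z)))) = S *\<^sub>v (Al *\<^sub>v (S *\<^sub>v z))"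
  using arg_cong[OF range_proj_right, of "\<lambda>X. X *\<^sub>v z"] S Al V
  by (simp add: B_mult_vec assoc_mult_mat_vec[of _ n k _ n] assoc_mult_mat_vec[of _ n n _ n]
      mult_carrier_mat[of _ n n _ n])

lemma residual_correspond:
  assumes r: "r \<in> carrier_vec n" and \<rho>: "\<rho> \<in> carrier_vec k" and Sr: "S *\<^sub>v r = V *\<^sub>v \<rho>"
  shows "Si *\<^sub>v (T *\<^sub>v r) = V *\<^sub>v \<rho>" "hinner (T *\<^sub>v r) r = hinner \<rho> \<rho>"
proof -
  have Tr: "T *\<^sub>v r = S *\<^sub>v (S *\<^sub>v r)"
    unfolding S(3)[symmetric] using S(1) r by simp
  show "Si *\<^sub>v (T *\<^sub>v r) = V *\<^sub>v \<rho>"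
    unfolding Tr Si_S_vec[OF carrier_mult_vec(2)[OF r]] by (rule Sr)
  have "hinner (T *\<^sub>v r) r = hinner (S *\<^sub>v r) (S *\<^sub>v r)"
    unfolding Tr using hinner_adjoint[of S n n "S *\<^sub>v r" r] S r by simp
  also have "\<dots> = hinner \<rho> \<rho>"
    unfolding Sr using hinner_isometry[OF V \<rho> \<rho>] .
  finally show "hinner (T *\<^sub>v r) r = hinner \<rho> \<rho>" .
qed

lemma denominator_correspond:
  assumes p: "p \<in> carrier_vec n" and q: "q \<in> carrier_vec k" and pq: "Si *\<^sub>v p = V *\<^sub>v q"
  shows "hinner (Al *\<^sub>v p) p = hinner q (Bt *\<^sub>v q)"
proof -
  have SVq: "S *\<^sub>v (V *\<^sub>v q) = p" using S_Si_vec[OF p] pq by simp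
  have "hinner q (Bt *\<^sub>v q) = hinner (V *\<^sub>v q) (S *\<^sub>v (Al *\<^sub>v p))"
    unfolding Bt_mult_vec[OF q] SVq
    using hinner_adjoint[of "mat_adjoint V" k n q "S *\<^sub>v (Al *\<^sub>v p)"] V p q by simp
  also have "\<dots> = hinner p (Al *\<^sub>v p)"
    using hinner_adjoint[of S n n "V *\<^sub>v q" "Al *\<^sub>v p"] S p q SVq by simp
  also have "\<dots> = hinner (Al *\<^sub>v p) p"
    using hinner_adjoint[OF Al(1) p p] Al by simp
  finally show ?thesis ..
qed

fun states_correspond ::
  "complex vec \<times> complex vec \<times> complex \<times> complex vec \<Rightarrow> complex vec \<times> complex vec \<times> complex vec \<Rightarrow> bool"
where
  "states_correspond (x, r, g, p) (y, \<rho>, q) \<longleftrightarrow>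
     x \<in> carrier_vec n \<and> r \<in> carrier_vec n \<and> p \<in> carrier_vec n \<and> \<rho> \<in> carrier_vec k \<and> q \<in> carrier_vec k \<and>
     y = mat_adjoint V *\<^sub>v (Si *\<^sub>v x) \<and> S *\<^sub>v r = V *\<^sub>v \<rho> \<and> Si *\<^sub>v p = V *\<^sub>v q \<and> g = hinner \<rho> \<rho>"

lemma start_correspond:
  assumes x0: "x0 \<in> carrier_vec n"
  shows "states_correspond (pcg Al T x0 0) (cg Bt (mat_adjoint V *\<^sub>v (Si *\<^sub>v x0)) 0)"
proof -
  define r where "r = - (Al *\<^sub>v x0)"
  define \<rho> where "\<rho> = - (Bt *\<^sub>v (mat_adjoint V *\<^sub>v (Si *\<^sub>v x0)))"
  have r: "r \<in> carrier_vec n" and \<rho>: "\<rho> \<in> carrier_vec k" unfolding r_def \<rho>_def using x0 by auto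
  have "V *\<^sub>v \<rho> = - (S *\<^sub>v (Al *\<^sub>v (S *\<^sub>v (Si *\<^sub>v x0))))"
    unfolding \<rho>_def using x0 V
    by (simp add: mult_mat_vec_uminus[of _ n k] V_Bt_mult_vec B_proj_vec)
  also have "\<dots> = S *\<^sub>v r"
    unfolding r_def using x0 S by (simp add: S_Si_vec mult_mat_vec_uminus[of _ n n])
  finally have Sr: "S *\<^sub>v r = V *\<^sub>v \<rho>" ..
  show ?thesis
    using x0 r \<rho> Sr residual_correspond[OF r \<rho> Sr]
    by (simp add: r_def[symmetric] \<rho>_def[symmetric] Let_def)
qed

lemma step_correspond:
  assumes "states_correspond (pcg Al T x0 i) (cg Bt y0 i)"
  shows "states_correspond (pcg Al T x0 (Suc i)) (cg Bt y0 (Suc i))"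
proof -
  obtain x r g p where pc: "pcg Al T x0 i = (x, r, g, p)" by (cases "pcg Al T x0 i") auto
  obtain y \<rho> q where cc: "cg Bt y0 i = (y, \<rho>, q)" by (cases "cg Bt y0 i") auto
  from assms have x: "x \<in> carrier_vec n" and r: "r \<in> carrier_vec n" and p: "p \<in> carrier_vec n"
    and \<rho>: "\<rho> \<in> carrier_vec k" and q: "q \<in> carrier_vec k" and xy: "y = mat_adjoint V *\<^sub>v (Si *\<^sub>v x)"
    and Sr: "S *\<^sub>v r = V *\<^sub>v \<rho>" and pq: "Si *\<^sub>v p = V *\<^sub>v q" and g: "g = hinner \<rho> \<rho>"
    unfolding pc cc by auto
  define \<delta> where "\<delta> = g / hinner (Al *\<^sub>v p) p"
  define r' where "r' = r - \<delta> \<cdot>\<^sub>v (Al *\<^sub>v p)"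
  define \<rho>' where "\<rho>' = \<rho> - \<delta> \<cdot>\<^sub>v (Bt *\<^sub>v q)"
  define \<beta> where "\<beta> = hinner (T *\<^sub>v r') r' / g"
  have \<alpha>: "hinner \<rho> \<rho> / hinner q (Bt *\<^sub>v q) = \<delta>"
    unfolding \<delta>_def g denominator_correspond[OF p q pq] ..
  have r': "r' \<in> carrier_vec n" and \<rho>': "\<rho>' \<in> carrier_vec k"
    unfolding r'_def \<rho>'_def using r p \<rho> q by auto
  have "S *\<^sub>v (Al *\<^sub>v p) = V *\<^sub>v (Bt *\<^sub>v q)"
    using V_Bt_mult_vec[OF q] S_Si_vec[OF p] pq by simp
  then have Sr': "S *\<^sub>v r' = V *\<^sub>v \<rho>'"
    unfolding r'_def \<rho>'_def using S V r p \<rho> q Sr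
    by (simp add: mult_minus_distrib_mat_vec[of _ n n] mult_minus_distrib_mat_vec[of _ n k]
        mult_mat_vec[of _ n n] mult_mat_vec[of _ n k])
  note res = residual_correspond[OF r' \<rho>' Sr']
  have \<beta>: "\<beta> = hinner \<rho>' \<rho>' / hinner \<rho> \<rho>" unfolding \<beta>_def res(2) g ..
  have "pcg Al T x0 (Suc i) = (x + \<delta> \<cdot>\<^sub>v p, r', hinner (T *\<^sub>v r') r', T *\<^sub>v r' + \<beta> \<cdot>\<^sub>v p)"
    by (simp add: pc Let_def \<delta>_def r'_def \<beta>_def)
  moreover have "cg Bt y0 (Suc i) = (y + \<delta> \<cdot>\<^sub>v q, \<rho>', \<rho>' + \<beta> \<cdot>\<^sub>v q)"
    by (simp add: cc Let_def \<alpha> \<rho>'_def \<beta>)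
  moreover have "mat_adjoint V *\<^sub>v (Si *\<^sub>v (x + \<delta> \<cdot>\<^sub>v p)) = y + \<delta> \<cdot>\<^sub>v q"
    using Si V x p q
    by (simp add: mult_add_distrib_mat_vec[of _ n n] mult_add_distrib_mat_vec[of _ k n]
        mult_mat_vec[of _ n n] mult_mat_vec[of _ k n] pq V_isometry_vec xy)
  moreover have "Si *\<^sub>v (T *\<^sub>v r' + \<beta> \<cdot>\<^sub>v p) = V *\<^sub>v (\<rho>' + \<beta> \<cdot>\<^sub>v q)"
    using Si V r' p \<rho>' q
    by (simp add: mult_add_distrib_mat_vec[of _ n n] mult_add_distrib_mat_vec[of _ n k]
        mult_mat_vec[of _ n n] mult_mat_vec[of _ n k] pq res(1))
  ultimately show ?thesis using x p q r' \<rho>' Sr' res(2) by simp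
qed

text \<open>This holds for every \<open>i\<close>, also after a breakdown: a division by zero gives \<open>0\<close> on both sides.\<close>

lemma pcg_cg_correspond:
  assumes "x0 \<in> carrier_vec n"
  shows "states_correspond (pcg Al T x0 i) (cg Bt (mat_adjoint V *\<^sub>v (Si *\<^sub>v x0)) i)"
  by (induction i) (use start_correspond[OF assms] step_correspond in auto)

lemma cg_defined_if_pcg_defined:
  assumes x0: "x0 \<in> carrier_vec n" and defined: "pcg_defined Al T x0 N"
  shows "cg_defined Bt (mat_adjoint V *\<^sub>v (Si *\<^sub>v x0)) N"
  unfolding cg_defined_def
proof (intro conjI allI impI)
  fix j
  obtain x r g p where pc: "pcg Al T x0 j = (x, r, g, p)" by (cases "pcg Al T x0 j") auto
  obtain y \<rho> q where cc: "cg Bt (mat_adjoint V *\<^sub>v (Si *\<^sub>v x0)) j = (y, \<rho>, q)"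
    by (cases "cg Bt (mat_adjoint V *\<^sub>v (Si *\<^sub>v x0)) j") auto
  have corr: "states_correspond (x, r, g, p) (y, \<rho>, q)"
    using pcg_cg_correspond[OF x0, of j] unfolding pc cc .
  then have "hinner (Al *\<^sub>v p) p = hinner q (Bt *\<^sub>v q)" and "g = hinner \<rho> \<rho>"
    using denominator_correspond by auto
  moreover have "j < N \<Longrightarrow> hinner (Al *\<^sub>v p) p \<noteq> 0" and "Suc j < N \<Longrightarrow> g \<noteq> 0"
    using defined pc unfolding pcg_defined_def by force+
  ultimately show "j < N \<Longrightarrow> case cg Bt (mat_adjoint V *\<^sub>v (Si *\<^sub>v x0)) j of (y, r, p) \<Rightarrow> hinner p (Bt *\<^sub>v p) \<noteq> 0"
    and "Suc j < N \<Longrightarrow> case cg Bt (mat_adjoint V *\<^sub>v (Si *\<^sub>v x0)) j of (y, r, p) \<Rightarrow> hinner r r \<noteq> 0"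
    unfolding cc by auto
qed

lemma pcg_x_correspond:
  assumes x0: "x0 \<in> carrier_vec n"
  shows "mat_adjoint V *\<^sub>v (Si *\<^sub>v pcg_x Al T x0 i) = cg_x Bt (mat_adjoint V *\<^sub>v (Si *\<^sub>v x0)) i"
  using pcg_cg_correspond[OF x0, of i] unfolding pcg_x_def cg_x_def
  by (cases "pcg Al T x0 i", cases "cg Bt (mat_adjoint V *\<^sub>v (Si *\<^sub>v x0)) i") auto

end

theorem lemma2p1:
  fixes A M T V :: "complex mat" and x0 :: "complex vec" and n k :: nat and l1 :: real
  assumes A: "A \<in> carrier_mat n n" "hermitian A"
    and M: "M \<in> carrier_mat n n" "pos_def M"
    and eig1: "poly (pencil_char_poly A M) (complex_of_real l1) = 0"
    and simple1: "order (complex_of_real l1) (pencil_char_poly A M) = 1"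
    and others: "\<And>\<mu>. poly (pencil_char_poly A M) \<mu> = 0 \<Longrightarrow> \<mu> \<noteq> complex_of_real l1 \<Longrightarrow>
                   \<mu> \<in> \<real> \<and> l1 < Re \<mu>"
    and T: "T \<in> carrier_mat n n" "pos_def T"
    and x0: "x0 \<in> carrier_vec n"
    and not_eigvec: "\<not> (x0 \<noteq> 0\<^sub>v n \<and> A *\<^sub>v x0 = complex_of_real l1 \<cdot>\<^sub>v (M *\<^sub>v x0))"
    and not_Morth: "\<exists>v \<in> carrier_vec n. A *\<^sub>v v = complex_of_real l1 \<cdot>\<^sub>v (M *\<^sub>v v) \<and>
                      hinner v (M *\<^sub>v x0) \<noteq> 0"
    and V: "V \<in> carrier_mat n k" "mat_adjoint V * V = 1\<^sub>m k"
    and V_span: "{V *\<^sub>v y | y. y \<in> carrier_vec k} =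
       {(psqrt T * (A - complex_of_real l1 \<cdot>\<^sub>m M) * psqrt T) *\<^sub>v z | z. z \<in> carrier_vec n}"
  shows "\<forall>N. pcg_defined (A - complex_of_real l1 \<cdot>\<^sub>m M) T x0 N \<longrightarrow>
           (let B = psqrt T * (A - complex_of_real l1 \<cdot>\<^sub>m M) * psqrt T;
                Bt = mat_adjoint V * B * V;
                xt = (\<lambda>i. mat_adjoint V *\<^sub>v (psqrt_inv T *\<^sub>v pcg_x (A - complex_of_real l1 \<cdot>\<^sub>m M) T x0 i))
            in cg_defined Bt (xt 0) N \<and> (\<forall>i \<le> N. xt i = cg_x Bt (xt 0) i))"
proof -
  let ?Al = "A - complex_of_real l1 \<cdot>\<^sub>m M"
  have Al: "?Al \<in> carrier_mat n n" "mat_adjoint ?Al = ?Al"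
    using A M mat_adjoint_minus_real_smult[OF A(1) M(1)] unfolding hermitian_def pos_def_def by auto
  have "psqrt T * ?Al * psqrt T \<in> carrier_mat n n"
    using Al(1) psqrt(1)[OF T] by auto
  then have range_proj: "V * mat_adjoint V * (psqrt T * ?Al * psqrt T) = psqrt T * ?Al * psqrt T"
    using isometry_range_projection[OF V] V_span by blast
  interpret pcg_cg_transform ?Al "psqrt T" "psqrt_inv T" T V n k
    using Al psqrt[OF T] psqrt_inv[OF T] V range_proj by unfold_locales (auto simp: pos_def_def hermitian_def)
  have x00: "pcg_x ?Al T x0 0 = x0" unfolding pcg_x_def by (simp add: Let_def)
  show ?thesis
    unfolding Let_def Bt_def[symmetric] x00
    using cg_defined_if_pcg_defined[OF x0] pcg_x_correspond[OF x0] by auto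
qed

end
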